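(* Let $L\ge1$ and $K\ge L$ be integers. (i) Assume $\alpha\in(\alpha_{L+1},\alpha_L)$. There is a constant $c(K)>0$ depending only on $\alpha$ and $K$ such that: if $(l_0,\dots,l_{K+2})$ satisfies $(E_K)$ and $l_1,\dots,l_{K+2}\ge0$, then $d_0\ge c(K)$; and if moreover $l_{K+2}=0$, then $d_{K+1}\le-c(K)$. (ii) Assume $\alpha\in(\alpha_{L+1},\alpha_L]$. If $(l_0,\dots,l_{K+2})$ satisfies $(E_K)$, then $$l_{L+2}-\alpha l_{L+1}=-\frac{\sin(\frac{L+2}{2}\omega)}{\sin(\frac{L}{2}\omega)}\,l_1+2\alpha\,\frac{\cos(\frac{\omega}{2})\sin(\frac{L+3}{2}\omega)}{\sin(\frac{L}{2}\omega)}\,l_{L+1}.$$ Moreover, if $\alpha\in(\alpha_{L+1},\alpha_L)$ and $l_1,\dots,l_{K+2}\ge0$, then $l_{L+2}-\alpha l_{L+1}<-c(K)$ (for a positive constant $c(K)$ depending only on $\alpha,K$, which may be taken equal to the one in (i)).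
   Context: Define $\alpha_1:=+\infty$ and, for $L\ge2$, $\alpha_L:=\dfrac{1}{1+2\cos(\frac{2\pi}{L+2})}$. For $\alpha>1/3$, let $\omega\in(0,\pi)$ be the unique real with $\cos\omega=\frac{1-\alpha}{2\alpha}$. For an integer $K\ge0$ and a real vector $(l_0,\dots,l_{K+2})$, set $d_0:=l_0-l_1+\alpha l_2$, $d_j:=-\alpha l_{j-1}+l_j-l_{j+1}+\alpha l_{j+2}$ for $j\in\{1,\dots,K\}$, and $d_{K+1}:=-\alpha l_K+l_{K+1}-l_{K+2}$. The system $(E_K)$ is: $d_1=\dots=d_K=0$, $l_0=0$, and $\sum_{j=1}^{K+1}l_j=1$. *)

theory Defs
  imports Complex_Main "HOL-Library.Extended_Real"
begin

definition alpha_crit :: "nat \<Rightarrow> ereal" where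
  "alpha_crit L = (if L \<le> 1 then \<infinity>
      else ereal (1 / (1 + 2 * cos (2 * pi / real (L + 2)))))"

definition omega :: "real \<Rightarrow> real" where
  "omega \<alpha> = arccos ((1 - \<alpha>) / (2 * \<alpha>))"

definition dq :: "real \<Rightarrow> nat \<Rightarrow> (nat \<Rightarrow> real) \<Rightarrow> nat \<Rightarrow> real" where
  "dq \<alpha> K l j =
     (if j = 0 then l 0 - l 1 + \<alpha> * l 2
      else if j \<le> K then - \<alpha> * l (j - 1) + l j - l (j + 1) + \<alpha> * l (j + 2)
      else - \<alpha> * l K + l (K + 1) - l (K + 2))"

definition system_E :: "real \<Rightarrow> nat \<Rightarrow> (nat \<Rightarrow> real) \<Rightarrow> bool" where
  "system_E \<alpha> K l \<longleftrightarrow>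
     (\<forall>j\<in>{1..K}. dq \<alpha> K l j = 0) \<and> l 0 = 0 \<and> (\<Sum>j=1..K+1. l j) = 1"

end

(* Every solution of d_1 = ... = d_K = 0 with l_0 = 0 is l_n = Q (cos n w - 1) + R sin n w,
   because the characteristic polynomial alpha (x^3 - 1) - (x^2 - x) has the roots 1 and exp(+-i w)
   exactly when alpha (1 + 2 cos w) = 1, i.e. w = omega alpha.  Such a solution factors as
   l_n = 2 sin (n w/2) W(n) with W(s) = R cos (s w/2) - Q sin (s w/2).
   For alpha_{L+1} < alpha < alpha_L the angle satisfies 2 pi/(L+3) < w < 2 pi/(L+2), so
   sin (n w/2) > 0 for n <= L+2 and nonnegativity of l forces W(n) >= 0 there.  Any two values of
   the sinusoid W control |Q| + |R|, which the normalisation sum l_j = 1 bounds below by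
   1/(2(K+1)).  Finally d_0 = alpha l_{-1} (the formula for l_n continued to n = -1) and
   l_{L+2} - alpha l_{L+1} are combinations of such nonnegative values of W with coefficients of
   a fixed sign, and d_{K+1} reduces to d_0 by reading a solution with l_{K+2} = 0 backwards. *)

theory Submission
  imports Defs
begin

definition trig_sol :: "real \<Rightarrow> real \<Rightarrow> real \<Rightarrow> real \<Rightarrow> real" where
  "trig_sol w Q R x = Q * (cos (x * w) - 1) + R * sin (x * w)"

definition trig_cofactor :: "real \<Rightarrow> real \<Rightarrow> real \<Rightarrow> real \<Rightarrow> real" where
  "trig_cofactor w Q R s = R * cos (s * (w/2)) - Q * sin (s * (w/2))"

lemma trig_sol_diff:
  "trig_sol w Q R a - trig_sol w Q R b = 2 * sin ((a - b) * (w/2)) * trig_cofactor w Q R (a + b)"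
proof -
  define u where "u = (a + b) * (w/2)"
  define v where "v = (a - b) * (w/2)"
  have a: "a * w = u + v" and b: "b * w = u - v"
    unfolding u_def v_def by (simp_all add: field_simps)
  show ?thesis
    unfolding trig_sol_def trig_cofactor_def a b u_def[symmetric] v_def[symmetric]
    by (simp add: sin_add sin_diff cos_add cos_diff algebra_simps)
qed

lemma trig_sol_0 [simp]: "trig_sol w Q R 0 = 0"
  by (simp add: trig_sol_def)

lemma trig_sol_factor: "trig_sol w Q R a = 2 * sin (a * (w/2)) * trig_cofactor w Q R a"
  using trig_sol_diff[of w Q R a 0] by simp

lemma trig_cofactor_three_term:
  "trig_cofactor w Q R a * sin ((c - b) * (w/2)) + trig_cofactor w Q R b * sin ((a - c) * (w/2))
   + trig_cofactor w Q R c * sin ((b - a) * (w/2)) = 0"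
proof -
  have e: "\<And>x y. (x - y) * (w/2) = x * (w/2) - y * (w/2)"
    by (rule left_diff_distrib)
  show ?thesis
    unfolding trig_cofactor_def e by (simp add: sin_diff algebra_simps)
qed

lemma coeffs_le_trig_cofactor_pair:
  "(\<bar>Q\<bar> + \<bar>R\<bar>) * \<bar>sin ((j - i) * (w/2))\<bar>
     \<le> 2 * (\<bar>trig_cofactor w Q R i\<bar> + \<bar>trig_cofactor w Q R j\<bar>)"
proof -
  define Wi Wj where "Wi = trig_cofactor w Q R i" and "Wj = trig_cofactor w Q R j"
  have e: "\<And>x y. (x - y) * (w/2) = x * (w/2) - y * (w/2)"
    by (rule left_diff_distrib)
  have R_eq: "R * sin ((j - i) * (w/2)) = Wi * sin (j * (w/2)) - Wj * sin (i * (w/2))"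
   and Q_eq: "Q * sin ((j - i) * (w/2)) = Wi * cos (j * (w/2)) - Wj * cos (i * (w/2))"
    unfolding Wi_def Wj_def trig_cofactor_def e by (simp_all add: sin_diff algebra_simps)
  have bound: "\<bar>Wi * f (j * (w/2)) - Wj * f (i * (w/2))\<bar> \<le> \<bar>Wi\<bar> + \<bar>Wj\<bar>"
    if "\<And>x. \<bar>f x\<bar> \<le> 1" for f :: "real \<Rightarrow> real"
  proof -
    have "\<bar>Wi * f (j * (w/2))\<bar> \<le> \<bar>Wi\<bar>" "\<bar>Wj * f (i * (w/2))\<bar> \<le> \<bar>Wj\<bar>"
      using that by (simp_all add: abs_mult mult_left_le)
    then show ?thesis
      by (rule order_trans[OF abs_triangle_ineq4 add_mono])
  qed
  have "\<bar>R\<bar> * \<bar>sin ((j - i) * (w/2))\<bar> \<le> \<bar>Wi\<bar> + \<bar>Wj\<bar>"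
    "\<bar>Q\<bar> * \<bar>sin ((j - i) * (w/2))\<bar> \<le> \<bar>Wi\<bar> + \<bar>Wj\<bar>"
    unfolding abs_mult[symmetric] R_eq Q_eq by (rule bound, simp)+
  then show ?thesis
    unfolding Wi_def Wj_def by (simp add: algebra_simps)
qed

lemma abs_trig_sol_le: "\<bar>trig_sol w Q R x\<bar> \<le> 2 * (\<bar>Q\<bar> + \<bar>R\<bar>)"
proof -
  have "\<bar>Q * (cos (x * w) - 1)\<bar> \<le> \<bar>Q\<bar> * 2"
    unfolding abs_mult by (rule mult_left_mono) (use abs_cos_le_one[of "x * w"] in auto)
  moreover have "\<bar>R * sin (x * w)\<bar> \<le> \<bar>R\<bar>"
    by (simp add: abs_mult mult_left_le)
  ultimately have "\<bar>Q * (cos (x * w) - 1)\<bar> + \<bar>R * sin (x * w)\<bar> \<le> 2 * (\<bar>Q\<bar> + \<bar>R\<bar>)"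
    by simp
  then show ?thesis
    unfolding trig_sol_def by (rule order_trans[OF abs_triangle_ineq])
qed

lemma coeffs_ge_of_sum_trig_sol:
  assumes "(\<Sum>n=1..K+1. trig_sol w Q R (real n)) = 1"
  shows "1 / (2 * (real K + 1)) \<le> \<bar>Q\<bar> + \<bar>R\<bar>"
proof -
  have "1 \<le> (\<Sum>n=1..K+1. 2 * (\<bar>Q\<bar> + \<bar>R\<bar>))"
    unfolding assms[symmetric] by (rule sum_mono) (use abs_trig_sol_le in \<open>auto simp: abs_le_iff\<close>)
  then show ?thesis
    by (simp add: field_simps)
qed

lemma trig_sol_recurrence:
  assumes "\<alpha> * (1 + 2 * cos w) = 1"
  shows "\<alpha> * (trig_sol w Q R (x + 3) - trig_sol w Q R x)
       = trig_sol w Q R (x + 2) - trig_sol w Q R (x + 1)"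
proof -
  define h where "h = w/2"
  have "sin (3 * h) = sin (2 * h) * cos h + cos (2 * h) * sin h"
    using sin_add[of "2 * h" h] by simp
  moreover have "sin h = sin (2 * h) * cos h - cos (2 * h) * sin h"
    using sin_diff[of "2 * h" h] by simp
  ultimately have "sin (3 * h) = sin h * (1 + 2 * cos w)"
    unfolding h_def by (simp add: algebra_simps)
  then have "\<alpha> * sin (3 * h) = (\<alpha> * (1 + 2 * cos w)) * sin h"
    by (simp add: ac_simps)
  then have sin3: "\<alpha> * sin (3 * h) = sin h"
    unfolding assms by simp
  have diff3: "trig_sol w Q R (x + 3) - trig_sol w Q R x = 2 * sin (3 * h) * trig_cofactor w Q R (2 * x + 3)"
   and diff1: "trig_sol w Q R (x + 2) - trig_sol w Q R (x + 1) = 2 * sin h * trig_cofactor w Q R (2 * x + 3)"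
    using trig_sol_diff[of w Q R "x + 3" x] trig_sol_diff[of w Q R "x + 2" "x + 1"]
    unfolding h_def by (simp_all add: algebra_simps)
  have "\<alpha> * (trig_sol w Q R (x + 3) - trig_sol w Q R x) = 2 * (\<alpha> * sin (3 * h)) * trig_cofactor w Q R (2 * x + 3)"
    unfolding diff3 by (simp only: ac_simps)
  then show ?thesis
    unfolding sin3 diff1 .
qed

lemma char_eq_sin_identity:
  fixes \<alpha> w y :: real
  assumes "\<alpha> * (1 + 2 * cos w) = 1"
  shows "sin (y * (w/2)) - \<alpha> * sin ((y - 2) * (w/2)) = 2 * \<alpha> * cos (w/2) * sin ((y + 1) * (w/2))"
proof -
  define h where "h = w/2"
  define v where "v = (y + 1) * h"
  have shift: "(y - 2) * h = v - 3 * h" "y * h = v - h"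
    unfolding v_def by (simp_all add: algebra_simps)
  have c2: "cos (2 * h) = cos h * cos h - sin h * sin h"
    and s2: "sin (2 * h) = 2 * sin h * cos h"
    using cos_add[of h h] sin_add[of h h] by simp_all
  have c3: "cos (3 * h) = cos (2 * h) * cos h - sin (2 * h) * sin h"
    and s3: "sin (3 * h) = sin (2 * h) * cos h + cos (2 * h) * sin h"
    using cos_add[of "2 * h" h] sin_add[of "2 * h" h] by simp_all
  have pyth: "sin h * sin h = 1 - cos h * cos h"
    using sin_cos_squared_add[of h] by (simp add: power2_eq_square)
  have "\<alpha> * (1 + 2 * (cos h * cos h - sin h * sin h)) = 1"
    using assms c2 unfolding h_def by simp
  then show ?thesis
    unfolding h_def[symmetric] shift v_def[symmetric] sin_diff s3 c3 s2 c2
    using pyth by algebra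
qed

lemma trig_sol_gap_identity:
  assumes "\<alpha> * (1 + 2 * cos w) = 1"
  shows "sin (y * (w/2)) * (trig_sol w Q R (y + 2) - \<alpha> * trig_sol w Q R (y + 1))
     = - sin ((y + 2) * (w/2)) * trig_sol w Q R 1
       + 2 * \<alpha> * cos (w/2) * sin ((y + 3) * (w/2)) * trig_sol w Q R (y + 1)"
proof -
  have "sin (y * (w/2)) * trig_sol w Q R (y + 2)
      = sin ((y + 2) * (w/2)) * (trig_sol w Q R (y + 1) - trig_sol w Q R 1)"
    using trig_sol_factor[of w Q R "y + 2"] trig_sol_diff[of w Q R "y + 1" 1]
    by (simp add: add.assoc algebra_simps)
  moreover have "sin ((y + 2) * (w/2)) - \<alpha> * sin (y * (w/2))
      = 2 * \<alpha> * cos (w/2) * sin ((y + 3) * (w/2))"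
    using char_eq_sin_identity[OF assms, of "y + 2"] by (simp add: add.assoc)
  ultimately show ?thesis
    by (simp add: algebra_simps)
qed

lemma trig_sol_interpolates:
  assumes "sin w \<noteq> 0" and "cos w \<noteq> 1"
  obtains Q R where "trig_sol w Q R 1 = a" and "trig_sol w Q R 2 = b"
proof
  define Q where "Q = (b - 2 * cos w * a) / (2 * (cos w - 1))"
  define R where "R = (a - Q * (cos w - 1)) / sin w"
  show sol1: "trig_sol w Q R 1 = a"
    unfolding trig_sol_def R_def using assms by simp
  have cos2: "cos (2 * w) = 2 * (cos w)\<^sup>2 - 1" and sin2: "sin (2 * w) = 2 * sin w * cos w"
    by (simp_all add: cos_double_cos sin_double)
  have "trig_sol w Q R 2 = 2 * cos w * trig_sol w Q R 1 + 2 * Q * (cos w - 1)"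
    unfolding trig_sol_def cos2 sin2 by (simp add: algebra_simps power2_eq_square)
  also have "\<dots> = 2 * cos w * a + 2 * Q * (cos w - 1)"
    unfolding sol1 ..
  also have "\<dots> = b"
    unfolding Q_def using assms by (simp add: field_simps)
  finally show "trig_sol w Q R 2 = b" .
qed

lemma system_E_eq_trig_sol:
  assumes sys: "system_E \<alpha> K l" and char: "\<alpha> * (1 + 2 * cos w) = 1"
    and init: "l 1 = trig_sol w Q R 1" "l 2 = trig_sol w Q R 2"
    and n: "n \<le> K + 2"
  shows "l n = trig_sol w Q R (real n)"
  using n
proof (induction n rule: less_induct)
  case (less n)
  show ?case
  proof (cases "n < 3")
    case True
    then consider "n = 0" | "n = 1" | "n = 2"
      by linarith
    then show ?thesis
      using sys init by cases (simp_all add: system_E_def)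
  next
    case False
    then obtain m where m: "n = m + 3"
      by (metis add.commute le_Suc_ex not_less)
    have j: "m + 1 \<in> {1..K}"
      using less.prems m by auto
    then have "dq \<alpha> K l (m + 1) = 0"
      using sys unfolding system_E_def by blast
    then have rec_l: "- \<alpha> * l m + l (m + 1) - l (m + 2) + \<alpha> * l (m + 3) = 0"
      using j unfolding dq_def by (simp add: add.assoc numeral_3_eq_3)
    have "l m = trig_sol w Q R (real m)" "l (m + 1) = trig_sol w Q R (real m + 1)"
      "l (m + 2) = trig_sol w Q R (real m + 2)"
      using less.IH[of m] less.IH[of "m + 1"] less.IH[of "m + 2"] m less.prems
      by (auto simp: add.commute)
    with rec_l have "- \<alpha> * trig_sol w Q R (real m) + trig_sol w Q R (real m + 1)
        - trig_sol w Q R (real m + 2) + \<alpha> * l (m + 3) = 0"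
      by simp
    moreover have "\<alpha> * trig_sol w Q R (real m + 3) - \<alpha> * trig_sol w Q R (real m)
        = trig_sol w Q R (real m + 2) - trig_sol w Q R (real m + 1)"
      using trig_sol_recurrence[OF char] by (simp add: right_diff_distrib)
    ultimately have "\<alpha> * l (m + 3) = \<alpha> * trig_sol w Q R (real m + 3)"
      by linarith
    moreover have "\<alpha> \<noteq> 0"
      using char by auto
    ultimately show ?thesis
      using m by simp
  qed
qed

lemma system_E_trig_sol:
  assumes sys: "system_E \<alpha> K l" and char: "\<alpha> * (1 + 2 * cos w) = 1"
    and w: "0 < w" "w < pi"
  obtains Q R where "\<And>n. n \<le> K + 2 \<Longrightarrow> l n = trig_sol w Q R (real n)"
proof -
  have "sin w \<noteq> 0" and "cos w \<noteq> 1"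
    using sin_gt_zero[OF w] cos_mono_less_eq[of w 0] w by auto
  then obtain Q R where "trig_sol w Q R 1 = l 1" "trig_sol w Q R 2 = l 2"
    by (rule trig_sol_interpolates)
  then show thesis
    using that system_E_eq_trig_sol[OF sys char] by metis
qed

lemma system_E_gap_formula:
  assumes sys: "system_E \<alpha> K l" and L: "1 \<le> L" "L \<le> K" and char: "\<alpha> * (1 + 2 * cos w) = 1"
    and w: "0 < w" "w \<le> 2 * pi / (real L + 2)"
  shows "l (L + 2) - \<alpha> * l (L + 1) =
    - (sin (real (L + 2) / 2 * w) / sin (real L / 2 * w)) * l 1
    + 2 * \<alpha> * (cos (w / 2) * sin (real (L + 3) / 2 * w) / sin (real L / 2 * w)) * l (L + 1)"
proof -
  have "2 * pi / (real L + 2) < pi"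
    using L by (simp add: field_simps)
  then obtain Q R where rep: "\<And>n. n \<le> K + 2 \<Longrightarrow> l n = trig_sol w Q R (real n)"
    using system_E_trig_sol[OF sys char] w by force
  have "w/2 \<le> pi / (real L + 2)"
    using w by (simp add: field_simps)
  then have "real L * (w/2) \<le> real L * (pi / (real L + 2))"
    by (rule mult_left_mono) simp
  then have "real L / 2 * w \<le> real L * (pi / (real L + 2))"
    by simp
  also have "\<dots> < pi"
    by (simp add: field_simps)
  finally have "0 < sin (real L / 2 * w)"
    using L w by (intro sin_gt_zero) auto
  moreover have "real (L + 2) / 2 * w = (real L + 2) * (w/2)" "real L / 2 * w = real L * (w/2)"
    "real (L + 3) / 2 * w = (real L + 3) * (w/2)"
    by (simp_all add: field_simps)
  moreover have "l (L + 2) = trig_sol w Q R (real L + 2)" "l (L + 1) = trig_sol w Q R (real L + 1)"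
    "l 1 = trig_sol w Q R 1"
    using rep L by (auto simp: add.commute)
  ultimately show ?thesis
    using trig_sol_gap_identity[OF char, of "real L" Q R] by (simp add: field_simps)
qed

lemma system_E_reverse:
  assumes sys: "system_E \<alpha> K l" and last: "l (K + 2) = 0"
  shows "system_E \<alpha> K (\<lambda>n. l (K + 2 - n))"
    and "dq \<alpha> K (\<lambda>n. l (K + 2 - n)) 0 = - dq \<alpha> K l (K + 1)"
proof -
  have "dq \<alpha> K (\<lambda>n. l (K + 2 - n)) j = 0" if j: "j \<in> {1..K}" for j
  proof -
    have "K + 2 - (j - 1) = (K + 1 - j) + 2" "K + 2 - (j + 1) = K + 1 - j"
      "K + 2 - (j + 2) = (K + 1 - j) - 1" "K + 2 - j = (K + 1 - j) + 1"
      and i: "K + 1 - j \<in> {1..K}"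
      using j by auto
    then have "dq \<alpha> K (\<lambda>n. l (K + 2 - n)) j = - dq \<alpha> K l (K + 1 - j)"
      using j by (simp add: dq_def)
    also have "\<dots> = 0"
      using sys i by (simp add: system_E_def)
    finally show ?thesis .
  qed
  moreover have "(\<Sum>j=1..K+1. l (K + 2 - j)) = (\<Sum>j=1..K+1. l j)"
    using sum.atLeastAtMost_rev[of l 1 "K + 1"] by simp
  ultimately show "system_E \<alpha> K (\<lambda>n. l (K + 2 - n))"
    using sys last by (auto simp: system_E_def)
  show "dq \<alpha> K (\<lambda>n. l (K + 2 - n)) 0 = - dq \<alpha> K l (K + 1)"
    using sys last by (simp add: dq_def system_E_def numeral_2_eq_2)
qed

lemma omega_props:
  assumes "\<alpha> > 1/3"
  shows "0 < omega \<alpha>" "omega \<alpha> < pi" "cos (omega \<alpha>) = (1 - \<alpha>) / (2 * \<alpha>)"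
    "\<alpha> * (1 + 2 * cos (omega \<alpha>)) = 1"
proof -
  have bounds: "-1 < (1 - \<alpha>) / (2 * \<alpha>)" "(1 - \<alpha>) / (2 * \<alpha>) < 1"
    using assms by (simp_all add: field_simps)
  then show "0 < omega \<alpha>" "omega \<alpha> < pi"
    using arccos_lt_bounded unfolding omega_def by auto
  show cos_omega: "cos (omega \<alpha>) = (1 - \<alpha>) / (2 * \<alpha>)"
    unfolding omega_def using bounds by (simp add: cos_arccos)
  show "\<alpha> * (1 + 2 * cos (omega \<alpha>)) = 1"
    unfolding cos_omega using assms by (simp add: field_simps)
qed

lemma omega_le_iff:
  assumes "\<alpha> > 1/3" and t: "0 \<le> t" "t \<le> pi" "1 + 2 * cos t > 0"
  shows "omega \<alpha> \<le> t \<longleftrightarrow> \<alpha> \<le> 1 / (1 + 2 * cos t)"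
    and "omega \<alpha> < t \<longleftrightarrow> \<alpha> < 1 / (1 + 2 * cos t)"
proof -
  note \<omega> = omega_props[OF assms(1)]
  have "omega \<alpha> \<le> t \<longleftrightarrow> cos t \<le> cos (omega \<alpha>)"
    using cos_mono_le_eq[of t "omega \<alpha>"] \<omega> t by auto
  also have "\<dots> \<longleftrightarrow> \<alpha> \<le> 1 / (1 + 2 * cos t)"
    unfolding \<omega>(3) using assms by (simp add: field_simps)
  finally show "omega \<alpha> \<le> t \<longleftrightarrow> \<alpha> \<le> 1 / (1 + 2 * cos t)" .
  have "omega \<alpha> < t \<longleftrightarrow> cos t < cos (omega \<alpha>)"
    using cos_mono_less_eq[of t "omega \<alpha>"] \<omega> t by auto
  also have "\<dots> \<longleftrightarrow> \<alpha> < 1 / (1 + 2 * cos t)"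
    unfolding \<omega>(3) using assms by (simp add: field_simps)
  finally show "omega \<alpha> < t \<longleftrightarrow> \<alpha> < 1 / (1 + 2 * cos t)" .
qed

lemma alpha_crit_eq:
  assumes "L \<ge> 2"
  shows "alpha_crit L = ereal (1 / (1 + 2 * cos (2 * pi / (real L + 2))))"
    and "1 + 2 * cos (2 * pi / (real L + 2)) > 0"
proof -
  have "0 \<le> 2 * pi / (real L + 2)" "2 * pi / (real L + 2) \<le> pi / 2"
    using assms by (simp_all add: field_simps)
  then have "0 \<le> cos (2 * pi / (real L + 2))"
    by (intro cos_ge_zero) linarith+
  then show "1 + 2 * cos (2 * pi / (real L + 2)) > 0"
    by simp
  show "alpha_crit L = ereal (1 / (1 + 2 * cos (2 * pi / (real L + 2))))"
    using assms by (simp add: alpha_crit_def add.commute)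
qed

lemma alpha_crit_less_imp:
  assumes "L \<ge> 1" and "alpha_crit (L + 1) < ereal \<alpha>"
  shows "\<alpha> > 1/3" and "2 * pi / (real L + 3) < omega \<alpha>"
proof -
  define t where "t = 2 * pi / (real L + 3)"
  have crit: "alpha_crit (L + 1) = ereal (1 / (1 + 2 * cos t))" "1 + 2 * cos t > 0"
    using alpha_crit_eq[of "L + 1"] assms(1) unfolding t_def by (simp_all add: add.commute)
  then have less: "1 / (1 + 2 * cos t) < \<alpha>"
    using assms(2) by simp
  have "1/3 \<le> 1 / (1 + 2 * cos t)"
    using crit(2) cos_le_one[of t] by (simp add: field_simps)
  with less show a: "\<alpha> > 1/3"
    by linarith
  have "0 \<le> t" "t \<le> pi"
    unfolding t_def by (simp_all add: field_simps)
  then show "2 * pi / (real L + 3) < omega \<alpha>"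
    using omega_le_iff(1)[OF a _ _ crit(2)] less unfolding t_def by force
qed

lemma omega_lt_two_pi_div_three:
  assumes "\<alpha> > 1/3"
  shows "omega \<alpha> < 2 * pi / 3"
proof -
  note \<omega> = omega_props[OF assms]
  have "cos (2 * pi / 3) < cos (omega \<alpha>)"
    unfolding cos_120 \<omega>(3) using assms by (simp add: field_simps)
  then show ?thesis
    using cos_mono_less_eq[of "2 * pi / 3" "omega \<alpha>"] \<omega>(1,2) by simp
qed

lemma le_alpha_crit_imp:
  assumes "L \<ge> 1" and "\<alpha> > 1/3"
  shows "ereal \<alpha> \<le> alpha_crit L \<Longrightarrow> omega \<alpha> \<le> 2 * pi / (real L + 2)"
    and "ereal \<alpha> < alpha_crit L \<Longrightarrow> omega \<alpha> < 2 * pi / (real L + 2)"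
proof -
  have "omega \<alpha> < 2 * pi / (real L + 2) \<or>
      (L \<ge> 2 \<and> alpha_crit L = ereal (1 / (1 + 2 * cos (2 * pi / (real L + 2))))
         \<and> 1 + 2 * cos (2 * pi / (real L + 2)) > 0)"
    using omega_lt_two_pi_div_three[OF assms(2)] alpha_crit_eq assms(1)
    by (cases "L = 1") auto
  moreover have "0 \<le> 2 * pi / (real L + 2)" "2 * pi / (real L + 2) \<le> pi"
    by (simp_all add: field_simps)
  ultimately show "ereal \<alpha> \<le> alpha_crit L \<Longrightarrow> omega \<alpha> \<le> 2 * pi / (real L + 2)"
    and "ereal \<alpha> < alpha_crit L \<Longrightarrow> omega \<alpha> < 2 * pi / (real L + 2)"
    using omega_le_iff[OF assms(2)] by auto
qed

text \<open>For \<open>w = omega \<alpha>\<close> the window below is exactly the range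
  \<open>alpha_crit (L + 1) < \<alpha> < alpha_crit L\<close>.\<close>

locale trig_window =
  fixes \<alpha> w :: real and L :: nat
  assumes char_eq: "\<alpha> * (1 + 2 * cos w) = 1"
    and L_pos: "1 \<le> L"
    and lower: "2 * pi / (real L + 3) < w"
    and upper: "w < 2 * pi / (real L + 2)"
begin

lemma w_pos: "0 < w"
  by (rule less_trans[OF _ lower]) simp

lemma w_lt_two_pi_div_three: "w < 2 * pi / 3"
proof -
  have "2 * pi / (real L + 2) \<le> 2 * pi / 3"
    using L_pos by (intro divide_left_mono) auto
  then show ?thesis
    using upper by linarith
qed

lemma w_lt_pi: "w < pi"
  using w_lt_two_pi_div_three pi_gt_zero by linarith

lemma alpha_pos: "0 < \<alpha>"
proof -
  have "cos (2 * pi / 3) < cos w"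
    using cos_mono_less_eq[of "2 * pi / 3" w] w_pos w_lt_two_pi_div_three by simp
  then have "0 < 1 + 2 * cos w"
    by (simp add: cos_120)
  moreover have "0 < \<alpha> * (1 + 2 * cos w)"
    using char_eq by simp
  ultimately show ?thesis
    by (simp add: zero_less_mult_iff)
qed

lemma sin_half_pos:
  assumes "0 < x" "x \<le> real L + 2"
  shows "0 < sin (x * (w/2))"
proof (rule sin_gt_zero)
  show "0 < x * (w/2)"
    using assms w_pos by simp
  have "x * (w/2) \<le> (real L + 2) * (w/2)"
    using assms w_pos by (intro mult_right_mono) auto
  also have "\<dots> < pi"
    using upper by (simp add: field_simps)
  finally show "x * (w/2) < pi" .
qed

lemma sin_L3_neg: "sin ((real L + 3) * (w/2)) < 0"
proof (rule sin_lt_zero)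
  show "pi < (real L + 3) * (w/2)"
    using lower by (simp add: field_simps)
  have "(real L + 3) * (w/2) = (real L + 2) * (w/2) + w/2"
    by (simp add: algebra_simps)
  moreover have "(real L + 2) * (w/2) < pi"
    using upper by (simp add: field_simps)
  ultimately show "(real L + 3) * (w/2) < 2 * pi"
    using w_lt_pi pi_gt_zero by linarith
qed

lemma cos_half_pos: "0 < cos (w/2)"
  using cos_gt_zero[of "w/2"] w_pos w_lt_pi by simp

lemma trig_cofactor_nonneg:
  assumes nonneg: "\<forall>n\<in>{1..L+2}. 0 \<le> trig_sol w Q R (real n)" and n: "n \<in> {1..L+2}"
  shows "0 \<le> trig_cofactor w Q R (real n)"
proof -
  have "0 < sin (real n * (w/2))"
    using n by (intro sin_half_pos) auto
  moreover have "0 \<le> 2 * sin (real n * (w/2)) * trig_cofactor w Q R (real n)"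
    using nonneg n unfolding trig_sol_factor by blast
  ultimately show ?thesis
    by (simp add: zero_le_mult_iff)
qed

definition edge_coeff :: real where
  "edge_coeff = min (- sin ((real L + 3) * (w/2))) (sin ((real L + 2) * (w/2))) * sin (w/2)"

definition gap_coeff :: real where
  "gap_coeff = min (2 * sin ((real L + 2) * (w/2)) * sin (w/2))
     (- 4 * \<alpha> * cos (w/2) * sin ((real L + 3) * (w/2)) * sin ((real L + 1) * (w/2))) / 2"

lemma edge_coeff_pos: "0 < edge_coeff"
  unfolding edge_coeff_def using sin_L3_neg sin_half_pos[of "real L + 2"] sin_half_pos[of 1] by simp

lemma gap_coeff_pos: "0 < gap_coeff"
proof -
  have "0 < 4 * \<alpha> * cos (w/2) * (- sin ((real L + 3) * (w/2))) * sin ((real L + 1) * (w/2))"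
    using alpha_pos cos_half_pos sin_L3_neg sin_half_pos[of "real L + 1"]
    by (intro mult_pos_pos) simp_all
  then show ?thesis
    unfolding gap_coeff_def using sin_half_pos[of "real L + 2"] sin_half_pos[of 1] by simp
qed

lemma trig_sol_minus_one_ge:
  assumes nonneg: "\<forall>n\<in>{1..L+2}. 0 \<le> trig_sol w Q R (real n)"
  shows "edge_coeff * (\<bar>Q\<bar> + \<bar>R\<bar>) \<le> trig_sol w Q R (-1)"
proof -
  define WA WB where "WA = trig_cofactor w Q R (real L + 1)" and "WB = trig_cofactor w Q R (real L + 2)"
  define m where "m = min (- sin ((real L + 3) * (w/2))) (sin ((real L + 2) * (w/2)))"
  have WA: "0 \<le> WA" and WB: "0 \<le> WB"
    using trig_cofactor_nonneg[OF nonneg, of "L + 1"] trig_cofactor_nonneg[OF nonneg, of "L + 2"]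
    unfolding WA_def WB_def by (auto simp: add.commute)
  have angles: "(-1 - (real L + 2)) * (w/2) = - ((real L + 3) * (w/2))"
    "(real L + 2 - (real L + 1)) * (w/2) = w/2" "(real L + 1 - -1) * (w/2) = (real L + 2) * (w/2)"
    by (simp_all add: algebra_simps)
  have "trig_cofactor w Q R (-1) * sin (w/2)
      = WA * sin ((real L + 3) * (w/2)) - WB * sin ((real L + 2) * (w/2))"
    using trig_cofactor_three_term[of w Q R "-1" "real L + 2" "real L + 1", unfolded angles]
    unfolding WA_def WB_def by (simp only: sin_minus mult_minus_right mult_1)
  then have "trig_sol w Q R (-1) = 2 * (- sin ((real L + 3) * (w/2))) * WA + 2 * sin ((real L + 2) * (w/2)) * WB"
    using trig_sol_factor[of w Q R "-1"] by (simp add: algebra_simps)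
  also have "\<dots> \<ge> 2 * m * (WA + WB)"
    using mult_right_mono[OF min.cobounded1 WA, of "- sin ((real L + 3) * (w/2))" "sin ((real L + 2) * (w/2))"]
      mult_right_mono[OF min.cobounded2 WB, of "- sin ((real L + 3) * (w/2))" "sin ((real L + 2) * (w/2))"]
    unfolding m_def distrib_left by linarith
  finally have "2 * m * (WA + WB) \<le> trig_sol w Q R (-1)" .
  moreover have "(\<bar>Q\<bar> + \<bar>R\<bar>) * sin (w/2) \<le> 2 * (WA + WB)"
    using coeffs_le_trig_cofactor_pair[of Q R "real L + 2" "real L + 1" w] WA WB sin_half_pos[of 1]
    unfolding WA_def WB_def by simp
  then have "m * ((\<bar>Q\<bar> + \<bar>R\<bar>) * sin (w/2)) \<le> m * (2 * (WA + WB))"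
    using edge_coeff_pos sin_half_pos[of 1] unfolding edge_coeff_def m_def[symmetric]
    by (intro mult_left_mono) (auto simp: zero_less_mult_iff)
  ultimately show ?thesis
    unfolding edge_coeff_def m_def[symmetric] by (simp add: algebra_simps)
qed

lemma trig_sol_gap_le:
  assumes nonneg: "\<forall>n\<in>{1..L+2}. 0 \<le> trig_sol w Q R (real n)"
  shows "trig_sol w Q R (real L + 2) - \<alpha> * trig_sol w Q R (real L + 1) \<le> - gap_coeff * (\<bar>Q\<bar> + \<bar>R\<bar>)"
proof -
  define W1 WA where "W1 = trig_cofactor w Q R 1" and "WA = trig_cofactor w Q R (real L + 1)"
  define c1 where "c1 = 2 * sin ((real L + 2) * (w/2)) * sin (w/2)"
  define c2 where "c2 = - 4 * \<alpha> * cos (w/2) * sin ((real L + 3) * (w/2)) * sin ((real L + 1) * (w/2))"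
  define X where "X = trig_sol w Q R (real L + 2) - \<alpha> * trig_sol w Q R (real L + 1)"
  have W1: "0 \<le> W1" and WA: "0 \<le> WA"
    using trig_cofactor_nonneg[OF nonneg, of 1] trig_cofactor_nonneg[OF nonneg, of "L + 1"]
    unfolding W1_def WA_def by (auto simp: add.commute)
  have sin_L: "0 < sin (real L * (w/2))"
    using sin_half_pos[of "real L"] L_pos by simp
  have "sin (real L * (w/2)) * X = - c1 * W1 - c2 * WA"
    using trig_sol_gap_identity[OF char_eq, of "real L" Q R]
      trig_sol_factor[of w Q R 1] trig_sol_factor[of w Q R "real L + 1"]
    unfolding X_def c1_def c2_def W1_def WA_def by (simp add: algebra_simps)
  also have "\<dots> \<le> - (min c1 c2 * W1 + min c1 c2 * WA)"
    using mult_right_mono[OF min.cobounded1 W1, of c1 c2] mult_right_mono[OF min.cobounded2 WA, of c1 c2]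
    by linarith
  also have "\<dots> = - (2 * gap_coeff) * (W1 + WA)"
    unfolding gap_coeff_def c1_def[symmetric] c2_def[symmetric] by (simp add: algebra_simps)
  also have "\<dots> \<le> - gap_coeff * ((\<bar>Q\<bar> + \<bar>R\<bar>) * sin (real L * (w/2)))"
    using coeffs_le_trig_cofactor_pair[of Q R "real L + 1" 1 w] W1 WA sin_L gap_coeff_pos
    unfolding W1_def WA_def by simp
  finally have "sin (real L * (w/2)) * X \<le> sin (real L * (w/2)) * (- gap_coeff * (\<bar>Q\<bar> + \<bar>R\<bar>))"
    by (simp add: algebra_simps)
  from mult_left_le_imp_le[OF this sin_L] show ?thesis
    unfolding X_def .
qed

lemma system_E_nonneg_trig_sol:
  assumes sys: "system_E \<alpha> K l" and KL: "L \<le> K" and nonneg: "\<forall>j\<in>{1..K+2}. 0 \<le> l j"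
  obtains Q R where "\<And>n. n \<le> K + 2 \<Longrightarrow> l n = trig_sol w Q R (real n)"
    and "\<forall>n\<in>{1..L+2}. 0 \<le> trig_sol w Q R (real n)"
    and "1 / (2 * (real K + 1)) \<le> \<bar>Q\<bar> + \<bar>R\<bar>"
proof -
  obtain Q R where rep: "\<And>n. n \<le> K + 2 \<Longrightarrow> l n = trig_sol w Q R (real n)"
    using system_E_trig_sol[OF sys char_eq w_pos w_lt_pi] by blast
  have "\<forall>n\<in>{1..L+2}. 0 \<le> trig_sol w Q R (real n)"
    using rep nonneg KL by force
  moreover have "(\<Sum>n=1..K+1. trig_sol w Q R (real n)) = 1"
    using sys rep by (simp add: system_E_def)
  ultimately show thesis
    using that rep coeffs_ge_of_sum_trig_sol by blast
qed

lemma dq_first_ge: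
  assumes sys: "system_E \<alpha> K l" and KL: "L \<le> K" and nonneg: "\<forall>j\<in>{1..K+2}. 0 \<le> l j"
  shows "\<alpha> * edge_coeff / (2 * (real K + 1)) \<le> dq \<alpha> K l 0"
proof -
  obtain Q R where rep: "\<And>n. n \<le> K + 2 \<Longrightarrow> l n = trig_sol w Q R (real n)"
    and sol_nonneg: "\<forall>n\<in>{1..L+2}. 0 \<le> trig_sol w Q R (real n)"
    and norm: "1 / (2 * (real K + 1)) \<le> \<bar>Q\<bar> + \<bar>R\<bar>"
    using system_E_nonneg_trig_sol[OF sys KL nonneg] by blast
  have "\<alpha> * (trig_sol w Q R 2 - trig_sol w Q R (-1)) = trig_sol w Q R 1"
    using trig_sol_recurrence[OF char_eq, of Q R "-1"] by simp
  then have "dq \<alpha> K l 0 = \<alpha> * trig_sol w Q R (-1)"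
    using rep[of 0] rep[of 1] rep[of 2] by (simp add: dq_def algebra_simps)
  moreover have "edge_coeff / (2 * (real K + 1)) \<le> edge_coeff * (\<bar>Q\<bar> + \<bar>R\<bar>)"
    using mult_left_mono[OF norm less_imp_le[OF edge_coeff_pos]] by simp
  then have "edge_coeff / (2 * (real K + 1)) \<le> trig_sol w Q R (-1)"
    using trig_sol_minus_one_ge[OF sol_nonneg] by linarith
  ultimately show ?thesis
    using mult_left_mono[of _ _ \<alpha>] alpha_pos by fastforce
qed

lemma dq_last_le:
  assumes sys: "system_E \<alpha> K l" and KL: "L \<le> K" and nonneg: "\<forall>j\<in>{1..K+2}. 0 \<le> l j"
    and last: "l (K + 2) = 0"
  shows "dq \<alpha> K l (K + 1) \<le> - (\<alpha> * edge_coeff / (2 * (real K + 1)))"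
proof -
  have "\<forall>j\<in>{1..K+2}. 0 \<le> l (K + 2 - j)"
    using nonneg sys by (force simp: system_E_def)
  then show ?thesis
    using dq_first_ge[OF system_E_reverse(1)[OF sys last] KL] system_E_reverse(2)[OF sys last]
    by simp
qed

lemma gap_le:
  assumes sys: "system_E \<alpha> K l" and KL: "L \<le> K" and nonneg: "\<forall>j\<in>{1..K+2}. 0 \<le> l j"
  shows "l (L + 2) - \<alpha> * l (L + 1) \<le> - (gap_coeff / (2 * (real K + 1)))"
proof -
  obtain Q R where rep: "\<And>n. n \<le> K + 2 \<Longrightarrow> l n = trig_sol w Q R (real n)"
    and sol_nonneg: "\<forall>n\<in>{1..L+2}. 0 \<le> trig_sol w Q R (real n)"
    and norm: "1 / (2 * (real K + 1)) \<le> \<bar>Q\<bar> + \<bar>R\<bar>"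
    using system_E_nonneg_trig_sol[OF sys KL nonneg] by blast
  have "l (L + 2) - \<alpha> * l (L + 1) = trig_sol w Q R (real L + 2) - \<alpha> * trig_sol w Q R (real L + 1)"
    using rep[of "L + 2"] rep[of "L + 1"] KL by (simp add: add.commute)
  moreover have "gap_coeff / (2 * (real K + 1)) \<le> gap_coeff * (\<bar>Q\<bar> + \<bar>R\<bar>)"
    using mult_left_mono[OF norm less_imp_le[OF gap_coeff_pos]] by simp
  ultimately show ?thesis
    using trig_sol_gap_le[OF sol_nonneg] by simp
qed

lemma uniform_bounds:
  assumes KL: "L \<le> K"
  shows "\<exists>c>0. \<forall>l. system_E \<alpha> K l \<and> (\<forall>j\<in>{1..K+2}. 0 \<le> l j) \<longrightarrow>
      c \<le> dq \<alpha> K l 0 \<and> (l (K + 2) = 0 \<longrightarrow> dq \<alpha> K l (K + 1) \<le> - c)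
      \<and> l (L + 2) - \<alpha> * l (L + 1) < - c"
proof (intro exI conjI allI impI)
  define c where "c = min (\<alpha> * edge_coeff / (2 * (real K + 1))) (gap_coeff / (4 * (real K + 1)))"
  show "0 < c"
    unfolding c_def using alpha_pos edge_coeff_pos gap_coeff_pos by simp
  have c_edge: "c \<le> \<alpha> * edge_coeff / (2 * (real K + 1))"
    unfolding c_def by simp
  have "gap_coeff / (4 * (real K + 1)) < gap_coeff / (2 * (real K + 1))"
    using gap_coeff_pos by (intro divide_strict_left_mono) auto
  then have c_gap: "c < gap_coeff / (2 * (real K + 1))"
    unfolding c_def by linarith
  fix l
  assume "system_E \<alpha> K l \<and> (\<forall>j\<in>{1..K+2}. 0 \<le> l j)"
  then have sys: "system_E \<alpha> K l" and nonneg: "\<forall>j\<in>{1..K+2}. 0 \<le> l j"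
    by auto
  show "c \<le> dq \<alpha> K l 0"
    using dq_first_ge[OF sys KL nonneg] c_edge by linarith
  show "dq \<alpha> K l (K + 1) \<le> - c" if "l (K + 2) = 0"
    using dq_last_le[OF sys KL nonneg that] c_edge by linarith
  show "l (L + 2) - \<alpha> * l (L + 1) < - c"
    using gap_le[OF sys KL nonneg] c_gap by linarith
qed

end

theorem mainTheorem11:
  fixes \<alpha> :: real and L K :: nat
  assumes "L \<ge> 1" and "K \<ge> L"
  shows
    "(alpha_crit (L + 1) < ereal \<alpha> \<and> ereal \<alpha> < alpha_crit L \<longrightarrow>
       (\<exists>c > 0. \<forall>l :: nat \<Rightarrow> real.
          system_E \<alpha> K l \<and> (\<forall>j\<in>{1..K+2}. l j \<ge> 0) \<longrightarrow>
            dq \<alpha> K l 0 \<ge> c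
            \<and> (l (K + 2) = 0 \<longrightarrow> dq \<alpha> K l (K + 1) \<le> - c)
            \<and> l (L + 2) - \<alpha> * l (L + 1) < - c))
     \<and>
     (alpha_crit (L + 1) < ereal \<alpha> \<and> ereal \<alpha> \<le> alpha_crit L \<longrightarrow>
       (\<forall>l :: nat \<Rightarrow> real. system_E \<alpha> K l \<longrightarrow>
          l (L + 2) - \<alpha> * l (L + 1) =
            - (sin (real (L + 2) / 2 * omega \<alpha>) / sin (real L / 2 * omega \<alpha>)) * l 1
            + 2 * \<alpha> * (cos (omega \<alpha> / 2) * sin (real (L + 3) / 2 * omega \<alpha>)
                        / sin (real L / 2 * omega \<alpha>)) * l (L + 1)))"
proof (intro conjI impI)
  assume crit: "alpha_crit (L + 1) < ereal \<alpha> \<and> ereal \<alpha> < alpha_crit L"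
  then have \<alpha>: "\<alpha> > 1/3" and lower: "2 * pi / (real L + 3) < omega \<alpha>"
    using alpha_crit_less_imp assms(1) by auto
  interpret W: trig_window \<alpha> "omega \<alpha>" L
    using omega_props(4)[OF \<alpha>] assms(1) lower le_alpha_crit_imp(2)[OF assms(1) \<alpha>] crit
    by unfold_locales auto
  show "\<exists>c>0. \<forall>l. system_E \<alpha> K l \<and> (\<forall>j\<in>{1..K+2}. l j \<ge> 0) \<longrightarrow>
      dq \<alpha> K l 0 \<ge> c \<and> (l (K + 2) = 0 \<longrightarrow> dq \<alpha> K l (K + 1) \<le> - c)
      \<and> l (L + 2) - \<alpha> * l (L + 1) < - c"
    using W.uniform_bounds[OF assms(2)] .
next
  assume crit: "alpha_crit (L + 1) < ereal \<alpha> \<and> ereal \<alpha> \<le> alpha_crit L"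
  then have \<alpha>: "\<alpha> > 1/3"
    using alpha_crit_less_imp assms(1) by auto
  then show "\<forall>l. system_E \<alpha> K l \<longrightarrow> l (L + 2) - \<alpha> * l (L + 1) =
      - (sin (real (L + 2) / 2 * omega \<alpha>) / sin (real L / 2 * omega \<alpha>)) * l 1
      + 2 * \<alpha> * (cos (omega \<alpha> / 2) * sin (real (L + 3) / 2 * omega \<alpha>)
                  / sin (real L / 2 * omega \<alpha>)) * l (L + 1)"
    using system_E_gap_formula assms omega_props[OF \<alpha>] le_alpha_crit_imp(1)[OF assms(1) \<alpha>] crit
    by blast
qed

end
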